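(* Let $q$ be a prime power and $\mathcal{L}$ a non-empty set of lines of $\mathrm{PG}(n,q)$ satisfying (Pt), (Pl), (Sd) and (To) (see context). Let $M$ be a $4$-dimensional subspace of $\mathrm{PG}(n,q)$ and let $P$ be a $(q+1)$-$M$-point. Then the plane $\pi_P$ contains at most $q+2$ $(q+1)$-$M$-points.
   Context: (Pt): every point of $\mathrm{PG}(n,q)$ lies on $0$ or $q+1$ lines of $\mathcal{L}$. (Pl): every plane contains $0$, $1$ or $q+1$ lines of $\mathcal{L}$. (Sd): every solid ($3$-dimensional subspace) contains $0$, $1$, $q+1$ or $2q+1$ lines of $\mathcal{L}$. (To): $|\mathcal{L}|\le q^5+q^4+q^3+q^2+q+1$. A point $X$ is a $(q+1)$-$M$-point if exactly $q+1$ lines of $\mathcal{L}$ pass through $X$ and are contained in $M$. For a point $P$ lying on lines of $\mathcal{L}$, $\pi_P$ denotes the subspace spanned by the $q+1$ lines of $\mathcal{L}$ through $P$ (under these hypotheses this is a plane). *)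

theory Defs
  imports "HOL-Analysis.Analysis"
begin

text \<open>PG(n,q) is modelled as the lattice of subspaces of the vector space
  'a^'m over a finite field 'a with q = CARD('a) and n + 1 = CARD('m).
  A projective subspace of projective dimension k is a vector subspace of
  (vector) dimension k+1.\<close>

definition psub :: "nat \<Rightarrow> ('a::field ^ 'm) set \<Rightarrow> bool" where
  "psub k U \<longleftrightarrow> vec.subspace U \<and> vec.dim U = k + 1"

definition pt_cond :: "nat \<Rightarrow> ('a::field ^ 'm) set set \<Rightarrow> bool" where
  "pt_cond q L \<longleftrightarrow> (\<forall>P. psub 0 P \<longrightarrow> card {l\<in>L. P \<subseteq> l} \<in> {0, q + 1})"

definition pl_cond :: "nat \<Rightarrow> ('a::field ^ 'm) set set \<Rightarrow> bool" where
  "pl_cond q L \<longleftrightarrow> (\<forall>E. psub 2 E \<longrightarrow> card {l\<in>L. l \<subseteq> E} \<in> {0, 1, q + 1})"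

definition sd_cond :: "nat \<Rightarrow> ('a::field ^ 'm) set set \<Rightarrow> bool" where
  "sd_cond q L \<longleftrightarrow> (\<forall>S. psub 3 S \<longrightarrow> card {l\<in>L. l \<subseteq> S} \<in> {0, 1, q + 1, 2 * q + 1})"

definition to_cond :: "nat \<Rightarrow> ('a::field ^ 'm) set set \<Rightarrow> bool" where
  "to_cond q L \<longleftrightarrow> card L \<le> q^5 + q^4 + q^3 + q^2 + q + 1"

definition qM_point :: "nat \<Rightarrow> ('a::field ^ 'm) set set \<Rightarrow> ('a ^ 'm) set \<Rightarrow> ('a ^ 'm) set \<Rightarrow> bool" where
  "qM_point q L M X \<longleftrightarrow> psub 0 X \<and> card {l\<in>L. X \<subseteq> l \<and> l \<subseteq> M} = q + 1"

definition pi_of :: "('a::field ^ 'm) set set \<Rightarrow> ('a ^ 'm) set \<Rightarrow> ('a ^ 'm) set" where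
  "pi_of L P = vec.span (\<Union>{l\<in>L. P \<subseteq> l})"

end

theory Submission
  imports Defs
begin

text \<open>Through a (q+1)-M-point X the q+1 lines of L all lie in M, and (Pl), (Sd) force them
  to be the full pencil of a plane \<pi>(X) \<subseteq> M. Every point X \<noteq> P of \<pi>(P) then lies on the line PX
  of L, so \<pi>(X) \<noteq> \<pi>(P) and \<pi>(P), \<pi>(X) span a solid of M through \<pi>(P). Two such points X, Y cannot
  give the same solid: it would contain the three pencils through P, X and Y, which pairwise
  share at most one line, hence at least 3q > 2q + 1 lines of L, contradicting (Sd). As M
  contains only q + 1 solids through \<pi>(P), there are at most q + 1 such points besides P.\<close>

lemma card_subspace:
  fixes U :: "('a::{field,finite} ^ 'm) set"
  assumes "vec.subspace U"
  shows "card U = CARD('a) ^ vec.dim U"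
proof -
  obtain B where B: "B \<subseteq> U" "vec.independent B" "U \<subseteq> vec.span B" "card B = vec.dim U"
    using vec.basis_exists by blast
  have fB: "finite B" by simp
  have UB: "vec.span B = U"
    using B assms by (metis vec.span_minimal subset_antisym)
  define f where "f = (\<lambda>c::'a^'m \<Rightarrow> 'a. \<Sum>v\<in>B. c v *s v)"
  have inj: "inj_on f (B \<rightarrow>\<^sub>E UNIV)"
  proof (rule inj_onI)
    fix c d assume c: "c \<in> B \<rightarrow>\<^sub>E UNIV" and d: "d \<in> B \<rightarrow>\<^sub>E UNIV" and e: "f c = f d"
    have "(\<Sum>v\<in>B. (c v - d v) *s v) = 0"
      using e by (simp add: f_def vector_sub_rdistrib sum_subtractf)
    then have "\<forall>v\<in>B. c v - d v = 0"
      using B(2) unfolding vec.independent_explicit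
      by (elim conjE allE[where x="\<lambda>v. c v - d v"]) simp
    then show "c = d" using c d by (auto simp: PiE_def extensional_def fun_eq_iff)
  qed
  have "f ` (B \<rightarrow>\<^sub>E UNIV) = U"
  proof
    show "f ` (B \<rightarrow>\<^sub>E UNIV) \<subseteq> U"
      using UB vec.span_finite[OF fB] by (auto simp: f_def)
    show "U \<subseteq> f ` (B \<rightarrow>\<^sub>E UNIV)"
    proof
      fix x assume "x \<in> U"
      then obtain u where "x = (\<Sum>v\<in>B. u v *s v)" using UB vec.span_finite[OF fB] by auto
      then have "x = f (restrict u B)" by (simp add: f_def)
      then show "x \<in> f ` (B \<rightarrow>\<^sub>E UNIV)" by auto
    qed
  qed
  then have "card U = card (B \<rightarrow>\<^sub>E (UNIV::'a set))"
    using card_image[OF inj] by simp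
  also have "\<dots> = CARD('a) ^ card B" by (simp add: card_PiE)
  finally show ?thesis using B by simp
qed

lemma dim_span_Un_add_dim_Int:
  fixes U W :: "('a::field ^ 'm) set"
  assumes "vec.subspace U" "vec.subspace W"
  shows "vec.dim (vec.span (U \<union> W)) + vec.dim (U \<inter> W) = vec.dim U + vec.dim W"
proof -
  have "vec.span (U \<union> W) = {x + y |x y. x \<in> U \<and> y \<in> W}"
    using assms by (simp add: vec.span_Un vec.span_eq_iff[THEN iffD2])
  then show ?thesis using vec.dim_sums_Int[OF assms] by simp
qed

lemma subspace_meet_codim_one:
  fixes U W V :: "('a::field ^ 'm) set"
  assumes sU: "vec.subspace U" and sW: "vec.subspace W" and sV: "vec.subspace V"
    and VUW: "V \<subseteq> U \<inter> W" and WU: "\<not> W \<subseteq> U" and dV: "vec.dim V + 1 = vec.dim W"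
  shows "U \<inter> W = V" "vec.dim (vec.span (U \<union> W)) = vec.dim U + 1"
proof -
  have sI: "vec.subspace (U \<inter> W)" using sU sW vec.subspace_inter by blast
  have "vec.dim V \<le> vec.dim (U \<inter> W)" using vec.dim_subset[OF VUW] .
  moreover have "vec.dim (U \<inter> W) \<le> vec.dim W" using vec.dim_subset[of "U \<inter> W" W] by blast
  moreover have "vec.dim (U \<inter> W) \<noteq> vec.dim W"
    using vec.subspace_dim_equal[OF sI sW] WU by (metis Int_lower2 inf.absorb_iff2 order_refl)
  ultimately have dI: "vec.dim (U \<inter> W) = vec.dim V" using dV by linarith
  show "U \<inter> W = V" using vec.subspace_dim_equal[OF sV sI VUW] dI by simp
  show "vec.dim (vec.span (U \<union> W)) = vec.dim U + 1"
    using dim_span_Un_add_dim_Int[OF sU sW] dI dV by linarith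
qed

lemma not_subset_of_equal_dim:
  fixes U W :: "('a::field ^ 'm) set"
  assumes "vec.subspace U" "vec.subspace W" "vec.dim U = vec.dim W" "U \<noteq> W"
  shows "\<not> W \<subseteq> U"
  using vec.subspace_dim_equal[of W U] assms by auto

lemma card_field_ge_2: "CARD('a::{field,finite}) \<ge> 2"
proof -
  have "card {0::'a, 1} \<le> CARD('a)" by (rule card_mono) auto
  then show ?thesis by simp
qed

text \<open>Distinct intermediate subspaces meet exactly in A, so the sets C - A are disjoint
  pieces of B - A, each of size q^(a+1) - q^a.\<close>
lemma card_intermediate_subspaces_le:
  fixes A B :: "('a::{field,finite} ^ 'm) set"
  assumes sA: "vec.subspace A" and sB: "vec.subspace B" and AB: "A \<subseteq> B"
    and dB: "vec.dim B = vec.dim A + 2"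
  shows "card {C. vec.subspace C \<and> A \<subseteq> C \<and> C \<subseteq> B \<and> vec.dim C = vec.dim A + 1}
    \<le> CARD('a) + 1"
proof -
  define F where "F = {C. vec.subspace C \<and> A \<subseteq> C \<and> C \<subseteq> B \<and> vec.dim C = vec.dim A + 1}"
  define q where "q = CARD('a)"
  define a where "a = vec.dim A"
  have cA: "card A = q ^ a" using card_subspace[OF sA] q_def a_def by simp
  have cC: "card (C - A) = q ^ (a + 1) - q ^ a" if "C \<in> F" for C
    using that card_subspace[of C] cA by (simp add: F_def q_def a_def card_Diff_subset)
  have disj: "(C - A) \<inter> (C' - A) = {}" if "C \<in> F" "C' \<in> F" "C \<noteq> C'" for C C'
  proof -
    have "\<not> C' \<subseteq> C"
      using that not_subset_of_equal_dim[of C C'] by (simp add: F_def)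
    then have "C \<inter> C' = A"
      using subspace_meet_codim_one[of C C' A] that sA by (simp add: F_def)
    then show ?thesis by blast
  qed
  have "card F * (q ^ (a + 1) - q ^ a) = card (\<Union>C\<in>F. C - A)"
    using card_UN_disjoint[of F "\<lambda>C. C - A"] disj cC by simp
  also have "\<dots> \<le> card (B - A)" by (rule card_mono) (auto simp: F_def)
  also have "\<dots> = q ^ (a + 2) - q ^ a"
    using card_subspace[OF sB] cA AB dB by (simp add: card_Diff_subset q_def a_def)
  finally have le: "card F * (q ^ a * (q - 1)) \<le> (q + 1) * (q ^ a * (q - 1))"
    by (simp add: power_add power2_eq_square algebra_simps diff_mult_distrib2)
  have "q ^ a * (q - 1) > 0" using card_field_ge_2[where 'a='a] q_def by simp
  then have "card F \<le> q + 1" using le by (metis mult_le_cancel2 not_gr0)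
  then show ?thesis by (simp add: F_def q_def)
qed

lemma card_Un_three_ge:
  assumes "finite A" "finite B" "finite C"
    and "card A = k" "card B = k" "card C = k"
    and "card (A \<inter> B) \<le> 1" "card (A \<inter> C) \<le> 1" "card (B \<inter> C) \<le> 1"
  shows "3 * k \<le> card (A \<union> B \<union> C) + 3"
proof -
  have "card ((A \<union> B) \<inter> C) \<le> card (A \<inter> C) + card (B \<inter> C)"
    by (metis Int_Un_distrib2 card_Un_le)
  then show ?thesis
    using assms card_Un_Int[of A B] card_Un_Int[of "A \<union> B" C] by simp
qed

lemma psub_span_two_points:
  fixes X Y :: "('a::field ^ 'm) set"
  assumes X: "psub 0 X" and Y: "psub 0 Y" and "X \<noteq> Y"
  shows "psub 1 (vec.span (X \<union> Y))"
proof -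
  have sX: "vec.subspace X" "vec.dim X = 1" and sY: "vec.subspace Y" "vec.dim Y = 1"
    using X Y by (simp_all add: psub_def)
  have "vec.dim {0 :: 'a ^ 'm} = 0" by (metis vec.dim_empty vec.dim_span vec.span_empty)
  moreover have "{0} \<subseteq> X \<inter> Y" using sX sY vec.subspace_0 by blast
  moreover have "\<not> Y \<subseteq> X" using not_subset_of_equal_dim[OF sX(1) sY(1)] sX sY \<open>X \<noteq> Y\<close> by simp
  ultimately have "vec.dim (vec.span (X \<union> Y)) = 2"
    using subspace_meet_codim_one(2)[OF sX(1) sY(1) vec.subspace_single_0] sX sY by simp
  then show ?thesis by (simp add: psub_def vec.subspace_span)
qed

lemma line_eq_span_points:
  fixes X Y l :: "('a::field ^ 'm) set"
  assumes l: "psub 1 l" and X: "psub 0 X" and Y: "psub 0 Y" and "X \<noteq> Y"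
    and "X \<subseteq> l" "Y \<subseteq> l"
  shows "l = vec.span (X \<union> Y)"
proof -
  have sl: "vec.subspace l" "vec.dim l = 2" using l by (simp_all add: psub_def)
  have "vec.span (X \<union> Y) \<subseteq> l" using sl(1) assms(5,6) by (simp add: vec.span_minimal)
  moreover have "vec.subspace (vec.span (X \<union> Y))" "vec.dim (vec.span (X \<union> Y)) = 2"
    using psub_span_two_points[OF X Y \<open>X \<noteq> Y\<close>] by (simp_all add: psub_def)
  ultimately show ?thesis using vec.subspace_dim_equal[of "vec.span (X \<union> Y)" l] sl by simp
qed

lemma psub_span_two_lines:
  fixes l1 l2 X :: "('a::field ^ 'm) set"
  assumes l1: "psub 1 l1" and l2: "psub 1 l2" and X: "psub 0 X"
    and "l1 \<noteq> l2" "X \<subseteq> l1" "X \<subseteq> l2"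
  shows "psub 2 (vec.span (l1 \<union> l2))"
proof -
  have s: "vec.subspace l1" "vec.subspace l2" "vec.subspace X"
    "vec.dim l1 = 2" "vec.dim l2 = 2" "vec.dim X = 1"
    using l1 l2 X by (simp_all add: psub_def)
  have "\<not> l2 \<subseteq> l1" using not_subset_of_equal_dim[OF s(1,2)] s \<open>l1 \<noteq> l2\<close> by simp
  then have "vec.dim (vec.span (l1 \<union> l2)) = 3"
    using subspace_meet_codim_one(2)[OF s(1,2,3)] s assms(5,6) by simp
  then show ?thesis by (simp add: psub_def vec.subspace_span)
qed

lemma psub_span_plane_line:
  fixes E l X :: "('a::field ^ 'm) set"
  assumes E: "psub 2 E" and l: "psub 1 l" and X: "psub 0 X"
    and "\<not> l \<subseteq> E" "X \<subseteq> E" "X \<subseteq> l"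
  shows "psub 3 (vec.span (E \<union> l))"
proof -
  have s: "vec.subspace E" "vec.subspace l" "vec.subspace X"
    "vec.dim E = 3" "vec.dim l = 2" "vec.dim X = 1"
    using E l X by (simp_all add: psub_def)
  have "vec.dim (vec.span (E \<union> l)) = 4"
    using subspace_meet_codim_one(2)[OF s(1,2,3)] s assms(4-6) by simp
  then show ?thesis by (simp add: psub_def vec.subspace_span)
qed

lemma planes_share_one_line:
  fixes E F l l' :: "('a::field ^ 'm) set"
  assumes E: "psub 2 E" and F: "psub 2 F" and "E \<noteq> F"
    and l: "psub 1 l" "l \<subseteq> E \<inter> F" and l': "psub 1 l'" "l' \<subseteq> E \<inter> F"
  shows "l = l'"
proof -
  have s: "vec.subspace E" "vec.subspace F" "vec.subspace l" "vec.subspace l'"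
    "vec.dim E = 3" "vec.dim F = 3" "vec.dim l = 2" "vec.dim l' = 2"
    using E F l l' by (simp_all add: psub_def)
  have "\<not> F \<subseteq> E" using not_subset_of_equal_dim[OF s(1,2)] s \<open>E \<noteq> F\<close> by simp
  then have "E \<inter> F = l" using subspace_meet_codim_one(1)[OF s(1,2,3) l(2)] s by simp
  then show ?thesis using vec.subspace_dim_equal[OF s(4,3)] s l'(2) by simp
qed

lemma line_subset_pi_of:
  assumes "l \<in> L" "X \<subseteq> l"
  shows "l \<subseteq> pi_of L X"
proof -
  have "l \<subseteq> \<Union>{l\<in>L. X \<subseteq> l}" using assms by blast
  then show ?thesis unfolding pi_of_def using vec.span_superset by blast
qed

locale line_set =
  fixes L :: "('a::{field,finite} ^ 'm) set set"
  assumes lines: "\<forall>l\<in>L. psub 1 l"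
    and Pt: "pt_cond CARD('a) L"
    and Pl: "pl_cond CARD('a) L"
    and Sd: "sd_cond CARD('a) L"
begin

lemma card_lines_through_two_points_le_1:
  assumes "psub 0 X" "psub 0 Y" "X \<noteq> Y"
  shows "card ({l\<in>L. X \<subseteq> l} \<inter> {l\<in>L. Y \<subseteq> l}) \<le> 1"
proof -
  have "{l\<in>L. X \<subseteq> l} \<inter> {l\<in>L. Y \<subseteq> l} \<subseteq> {vec.span (X \<union> Y)}"
    using lines line_eq_span_points[of _ X Y] assms by blast
  then show ?thesis using card_mono[of "{vec.span (X \<union> Y)}"] by simp
qed

lemma card_lines_in_two_planes_le_1:
  assumes "psub 2 E" "psub 2 F" "E \<noteq> F"
  shows "card ({l\<in>L. l \<subseteq> E} \<inter> {l\<in>L. l \<subseteq> F}) \<le> 1"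
proof -
  have "l = l'" if "l \<in> {l\<in>L. l \<subseteq> E} \<inter> {l\<in>L. l \<subseteq> F}"
    "l' \<in> {l\<in>L. l \<subseteq> E} \<inter> {l\<in>L. l \<subseteq> F}" for l l'
    using that lines planes_share_one_line[OF assms, of l l'] by blast
  then show ?thesis by (simp add: card_le_Suc0_iff_eq)
qed

lemma card_lines_in_plane:
  assumes E: "psub 2 E" and "l \<in> L" "l \<subseteq> E" "l' \<in> L" "l' \<subseteq> E" "l \<noteq> l'"
  shows "card {m\<in>L. m \<subseteq> E} = CARD('a) + 1"
proof -
  have "2 \<le> card {m\<in>L. m \<subseteq> E}"
    using card_mono[of "{m\<in>L. m \<subseteq> E}" "{l, l'}"] assms by simp
  moreover have "card {m\<in>L. m \<subseteq> E} \<in> {0, 1, CARD('a) + 1}"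
    using Pl E unfolding pl_cond_def by blast
  ultimately show ?thesis by (simp only: insert_iff empty_iff) arith
qed

lemma no_three_families_in_solid:
  assumes S: "psub 3 S"
    and sub: "A \<subseteq> {l\<in>L. l \<subseteq> S}" "B \<subseteq> {l\<in>L. l \<subseteq> S}" "C \<subseteq> {l\<in>L. l \<subseteq> S}"
    and "card A = CARD('a) + 1" "card B = CARD('a) + 1" "card C = CARD('a) + 1"
    and "card (A \<inter> B) \<le> 1" "card (A \<inter> C) \<le> 1" "card (B \<inter> C) \<le> 1"
  shows False
proof -
  have fin: "finite A" "finite B" "finite C" by simp_all
  have "3 * (CARD('a) + 1) \<le> card (A \<union> B \<union> C) + 3"
    using card_Un_three_ge[OF fin] assms by simp
  moreover have "card (A \<union> B \<union> C) \<le> card {l\<in>L. l \<subseteq> S}"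
    by (rule card_mono) (use sub in auto)
  moreover have "card {l\<in>L. l \<subseteq> S} \<in> {0, 1, CARD('a) + 1, 2 * CARD('a) + 1}"
    using Sd S unfolding sd_cond_def by blast
  ultimately show False
    using card_field_ge_2[where 'a='a] by (simp only: insert_iff empty_iff) arith
qed

text \<open>Otherwise the solid spanned by the three lines contains the pencils of L in the three
  planes they span pairwise; any two of these share one line, giving at least 3q > 2q + 1
  lines in the solid.\<close>
lemma lines_through_point_coplanar:
  assumes X: "psub 0 X" and l1: "l1 \<in> L" "X \<subseteq> l1" and l2: "l2 \<in> L" "X \<subseteq> l2"
    and "l1 \<noteq> l2" and l3: "l3 \<in> L" "X \<subseteq> l3"
  shows "l3 \<subseteq> vec.span (l1 \<union> l2)"
proof (rule ccontr)
  define E where "E = vec.span (l1 \<union> l2)"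
  define E13 where "E13 = vec.span (l1 \<union> l3)"
  define E23 where "E23 = vec.span (l2 \<union> l3)"
  assume "\<not> l3 \<subseteq> vec.span (l1 \<union> l2)"
  then have l3E: "\<not> l3 \<subseteq> E" by (simp add: E_def)
  have pl: "psub 1 l1" "psub 1 l2" "psub 1 l3" using lines l1(1) l2(1) l3(1) by blast+
  have in_E: "l1 \<subseteq> E" "l2 \<subseteq> E" "l1 \<subseteq> E13" "l3 \<subseteq> E13" "l2 \<subseteq> E23" "l3 \<subseteq> E23"
    unfolding E_def E13_def E23_def by (meson Un_upper1 Un_upper2 vec.span_superset subset_trans)+
  have ne: "l1 \<noteq> l3" "l2 \<noteq> l3" using in_E(1,2) l3E by blast+
  have E: "psub 2 E" unfolding E_def
    by (rule psub_span_two_lines[OF pl(1,2) X \<open>l1 \<noteq> l2\<close> l1(2) l2(2)])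
  have E13: "psub 2 E13" unfolding E13_def
    by (rule psub_span_two_lines[OF pl(1,3) X ne(1) l1(2) l3(2)])
  have E23: "psub 2 E23" unfolding E23_def
    by (rule psub_span_two_lines[OF pl(2,3) X ne(2) l2(2) l3(2)])
  have ne_E13: "E \<noteq> E13" and ne_E23: "E \<noteq> E23" using in_E(4,6) l3E by blast+
  have ne_E13_E23: "E13 \<noteq> E23"
  proof
    assume "E13 = E23"
    then have "E \<subseteq> E13"
      unfolding E_def using in_E E13 by (simp add: psub_def vec.span_minimal)
    then show False
      using vec.subspace_dim_equal[of E E13] E E13 ne_E13 by (simp add: psub_def)
  qed
  define S where "S = vec.span (E \<union> l3)"
  have S: "psub 3 S" unfolding S_def
    by (rule psub_span_plane_line[OF E pl(3) X l3E]) (use l1(2) in_E(1) l3(2) in \<open>blast+\<close>)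
  have "E \<subseteq> S" "l3 \<subseteq> S" "vec.subspace S"
    unfolding S_def by (meson Un_upper1 Un_upper2 vec.span_superset subset_trans vec.subspace_span)+
  then have in_S: "E \<subseteq> S" "E13 \<subseteq> S" "E23 \<subseteq> S"
    using in_E unfolding E13_def E23_def by (simp_all add: vec.span_minimal)
  show False
  proof (rule no_three_families_in_solid[OF S])
    show "{l\<in>L. l \<subseteq> E} \<subseteq> {l\<in>L. l \<subseteq> S}" "{l\<in>L. l \<subseteq> E13} \<subseteq> {l\<in>L. l \<subseteq> S}"
      "{l\<in>L. l \<subseteq> E23} \<subseteq> {l\<in>L. l \<subseteq> S}"
      using in_S by auto
    show "card {l\<in>L. l \<subseteq> E} = CARD('a) + 1"
      by (rule card_lines_in_plane[OF E l1(1) in_E(1) l2(1) in_E(2) \<open>l1 \<noteq> l2\<close>])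
    show "card {l\<in>L. l \<subseteq> E13} = CARD('a) + 1"
      by (rule card_lines_in_plane[OF E13 l1(1) in_E(3) l3(1) in_E(4) ne(1)])
    show "card {l\<in>L. l \<subseteq> E23} = CARD('a) + 1"
      by (rule card_lines_in_plane[OF E23 l2(1) in_E(5) l3(1) in_E(6) ne(2)])
  qed (use card_lines_in_two_planes_le_1 E E13 E23 ne_E13 ne_E23 ne_E13_E23 in auto)
qed

definition covered :: "('a ^ 'm) set \<Rightarrow> bool" where
  "covered X \<longleftrightarrow> psub 0 X \<and> (\<exists>l\<in>L. X \<subseteq> l)"

lemma card_lines_through_covered:
  assumes "covered X"
  shows "card {l\<in>L. X \<subseteq> l} = CARD('a) + 1"
proof -
  have "card {l\<in>L. X \<subseteq> l} \<noteq> 0" using assms by (auto simp: covered_def)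
  moreover have "card {l\<in>L. X \<subseteq> l} \<in> {0, CARD('a) + 1}"
    using Pt assms unfolding pt_cond_def covered_def by blast
  ultimately show ?thesis by (simp only: insert_iff empty_iff) blast
qed

lemma covered_subset_pi_of:
  assumes "covered X"
  shows "X \<subseteq> pi_of L X"
proof -
  obtain l where "l \<in> L" "X \<subseteq> l" using assms by (auto simp: covered_def)
  then show ?thesis using line_subset_pi_of by blast
qed

lemma qM_point_covered:
  assumes "qM_point CARD('a) L M X" and M: "vec.subspace M"
  shows "covered X" "pi_of L X \<subseteq> M"
proof -
  have X: "psub 0 X" and c: "card {l\<in>L. X \<subseteq> l \<and> l \<subseteq> M} = CARD('a) + 1"
    using assms by (auto simp: qM_point_def)
  have sub: "{l\<in>L. X \<subseteq> l \<and> l \<subseteq> M} \<subseteq> {l\<in>L. X \<subseteq> l}" by blast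
  have "{l\<in>L. X \<subseteq> l \<and> l \<subseteq> M} \<noteq> {}" using c by (metis card.empty add_is_0 one_neq_zero)
  then show cov: "covered X" using X by (auto simp: covered_def)
  have "{l\<in>L. X \<subseteq> l \<and> l \<subseteq> M} = {l\<in>L. X \<subseteq> l}"
    by (rule card_subset_eq[OF _ sub]) (simp_all add: c card_lines_through_covered[OF cov])
  then have "\<Union>{l\<in>L. X \<subseteq> l} \<subseteq> M" by blast
  then show "pi_of L X \<subseteq> M" unfolding pi_of_def using M by (rule vec.span_minimal)
qed

lemma pi_of_plane_pencil:
  assumes X: "covered X"
  shows "psub 2 (pi_of L X)" "{l\<in>L. l \<subseteq> pi_of L X} = {l\<in>L. X \<subseteq> l}"
proof -
  define LX where "LX = {l\<in>L. X \<subseteq> l}"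
  have pX: "psub 0 X" using X by (simp add: covered_def)
  have cX: "card LX = CARD('a) + 1"
    unfolding LX_def by (rule card_lines_through_covered[OF X])
  then have "\<not> card LX \<le> Suc 0" using card_field_ge_2[where 'a='a] by simp
  then obtain l1 l2 where l12: "l1 \<in> LX" "l2 \<in> LX" "l1 \<noteq> l2"
    using card_le_Suc0_iff_eq[of LX] by auto
  define E where "E = vec.span (l1 \<union> l2)"
  have l1: "l1 \<in> L" "X \<subseteq> l1" and l2: "l2 \<in> L" "X \<subseteq> l2" using l12 by (auto simp: LX_def)
  have E: "psub 2 E" unfolding E_def
    using psub_span_two_lines[OF _ _ pX l12(3) l1(2) l2(2)] lines l1(1) l2(1) by blast
  have LX_E: "l \<subseteq> E" if "l \<in> LX" for l
    using lines_through_point_coplanar[OF pX l1 l2 l12(3), of l] that by (simp add: LX_def E_def)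
  have "\<Union>LX \<subseteq> E" using LX_E by blast
  then have "pi_of L X \<subseteq> E"
    unfolding pi_of_def LX_def[symmetric] using E by (simp add: psub_def vec.span_minimal)
  moreover have "E \<subseteq> pi_of L X"
    unfolding pi_of_def E_def LX_def[symmetric] using l12 by (intro vec.span_mono) blast
  ultimately have piE: "pi_of L X = E" by blast
  then show "psub 2 (pi_of L X)" using E by simp
  have "card {l\<in>L. l \<subseteq> E} = CARD('a) + 1"
    using card_lines_in_plane[OF E l1(1) LX_E[OF l12(1)] l2(1) LX_E[OF l12(2)] l12(3)] .
  moreover have "LX \<subseteq> {l\<in>L. l \<subseteq> E}" using LX_E by (auto simp: LX_def)
  ultimately have "LX = {l\<in>L. l \<subseteq> E}"
    using card_subset_eq[of "{l\<in>L. l \<subseteq> E}" LX] cX by simp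
  then show "{l\<in>L. l \<subseteq> pi_of L X} = {l\<in>L. X \<subseteq> l}" using piE by (simp add: LX_def)
qed

text \<open>The q + 1 lines of L through P already exhaust the q + 1 lines of the plane \<pi>(P)
  through P.\<close>
lemma line_through_point_of_pi_of:
  assumes P: "covered P" and X: "psub 0 X" "X \<subseteq> pi_of L P" "X \<noteq> P"
  shows "vec.span (P \<union> X) \<in> L"
proof -
  define LP where "LP = {l\<in>L. P \<subseteq> l}"
  define F where "F = {C. vec.subspace C \<and> P \<subseteq> C \<and> C \<subseteq> pi_of L P \<and> vec.dim C = vec.dim P + 1}"
  have pP: "vec.subspace P" "vec.dim P = 1" using P by (simp_all add: covered_def psub_def)
  have pi: "vec.subspace (pi_of L P)" "vec.dim (pi_of L P) = 3"
    using pi_of_plane_pencil(1)[OF P] by (simp_all add: psub_def)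
  have PE: "P \<subseteq> pi_of L P" by (rule covered_subset_pi_of[OF P])
  have "card F \<le> CARD('a) + 1" unfolding F_def
    by (rule card_intermediate_subspaces_le[OF pP(1) pi(1) PE]) (simp add: pP pi)
  moreover have "LP \<subseteq> F"
  proof
    fix l assume "l \<in> LP"
    then have "l \<in> L" "P \<subseteq> l" by (simp_all add: LP_def)
    then show "l \<in> F" using lines line_subset_pi_of[of l L P] pP by (simp add: F_def psub_def)
  qed
  moreover have "card LP = CARD('a) + 1"
    unfolding LP_def by (rule card_lines_through_covered[OF P])
  ultimately have "LP = F" using card_seteq[of F LP] by simp
  moreover have "vec.span (P \<union> X) \<in> F"
  proof -
    have "vec.span (P \<union> X) \<subseteq> pi_of L P" using PE X(2) pi(1) by (simp add: vec.span_minimal)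
    moreover have "P \<subseteq> vec.span (P \<union> X)" by (meson Un_upper1 vec.span_superset subset_trans)
    moreover have "psub 1 (vec.span (P \<union> X))"
      using psub_span_two_points[of P X] P X(1,3) by (simp add: covered_def)
    ultimately show ?thesis by (simp add: F_def pP psub_def)
  qed
  ultimately show ?thesis unfolding LP_def by blast
qed

lemma pi_of_neq:
  assumes P: "covered P" and X: "covered X" "X \<subseteq> pi_of L P" "X \<noteq> P"
  shows "pi_of L X \<noteq> pi_of L P"
proof
  assume "pi_of L X = pi_of L P"
  then have "{l\<in>L. X \<subseteq> l} = {l\<in>L. P \<subseteq> l}"
    using pi_of_plane_pencil(2)[OF X(1)] pi_of_plane_pencil(2)[OF P] by simp
  then have "card {l\<in>L. X \<subseteq> l} \<le> 1"
    using card_lines_through_two_points_le_1[of X P] P X by (simp add: covered_def)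
  then show False
    using card_lines_through_covered[OF X(1)] card_field_ge_2[where 'a='a] by simp
qed

lemma psub_span_pi_of:
  assumes P: "covered P" and X: "covered X" "X \<subseteq> pi_of L P" "X \<noteq> P"
  shows "psub 3 (vec.span (pi_of L P \<union> pi_of L X))"
proof -
  define m where "m = vec.span (P \<union> X)"
  have m: "m \<in> L" unfolding m_def
    by (rule line_through_point_of_pi_of[OF P _ X(2,3)]) (use X(1) in \<open>simp add: covered_def\<close>)
  have "P \<subseteq> m" "X \<subseteq> m"
    unfolding m_def by (meson Un_upper1 Un_upper2 vec.span_superset subset_trans)+
  then have "m \<subseteq> pi_of L P \<inter> pi_of L X" using m line_subset_pi_of by blast
  moreover have "psub 1 m" using lines m by blast
  moreover have "\<not> pi_of L X \<subseteq> pi_of L P"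
    using not_subset_of_equal_dim[of "pi_of L P" "pi_of L X"] pi_of_neq[OF P X]
      pi_of_plane_pencil(1)[OF P] pi_of_plane_pencil(1)[OF X(1)] by (simp add: psub_def)
  ultimately have "vec.dim (vec.span (pi_of L P \<union> pi_of L X)) = 4"
    using subspace_meet_codim_one(2)[of "pi_of L P" "pi_of L X" m]
      pi_of_plane_pencil(1)[OF P] pi_of_plane_pencil(1)[OF X(1)] by (simp add: psub_def)
  then show ?thesis by (simp add: psub_def vec.subspace_span)
qed

lemma span_pi_of_neq:
  assumes P: "covered P" and X: "covered X" "X \<subseteq> pi_of L P" "X \<noteq> P"
    and Y: "covered Y" "Y \<subseteq> pi_of L P" "Y \<noteq> P" and "X \<noteq> Y"
  shows "vec.span (pi_of L P \<union> pi_of L X) \<noteq> vec.span (pi_of L P \<union> pi_of L Y)"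
proof
  define S where "S = vec.span (pi_of L P \<union> pi_of L X)"
  assume "vec.span (pi_of L P \<union> pi_of L X) = vec.span (pi_of L P \<union> pi_of L Y)"
  then have pi_S: "pi_of L P \<subseteq> S" "pi_of L X \<subseteq> S" "pi_of L Y \<subseteq> S"
    unfolding S_def by (metis Un_upper1 Un_upper2 vec.span_superset subset_trans)+
  have pencil_S: "{l\<in>L. Z \<subseteq> l} \<subseteq> {l\<in>L. l \<subseteq> S}" if "pi_of L Z \<subseteq> S" for Z
    using that line_subset_pi_of by blast
  have pts: "psub 0 P" "psub 0 X" "psub 0 Y" using P X Y by (simp_all add: covered_def)
  have S: "psub 3 S" unfolding S_def by (rule psub_span_pi_of[OF P X])
  show False
    by (rule no_three_families_in_solid[OF S pencil_S[OF pi_S(1)] pencil_S[OF pi_S(2)]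
          pencil_S[OF pi_S(3)] card_lines_through_covered[OF P]
          card_lines_through_covered[OF X(1)] card_lines_through_covered[OF Y(1)]
          card_lines_through_two_points_le_1[OF pts(1,2) X(3)[symmetric]]
          card_lines_through_two_points_le_1[OF pts(1,3) Y(3)[symmetric]]
          card_lines_through_two_points_le_1[OF pts(2,3) \<open>X \<noteq> Y\<close>]])
qed

lemma card_points_of_pi_of_le:
  assumes P: "covered P" and M: "psub 4 M" and piM: "pi_of L P \<subseteq> M"
    and T: "\<And>X. X \<in> T \<Longrightarrow> covered X" "\<And>X. X \<in> T \<Longrightarrow> X \<subseteq> pi_of L P"
      "\<And>X. X \<in> T \<Longrightarrow> X \<noteq> P" "\<And>X. X \<in> T \<Longrightarrow> pi_of L X \<subseteq> M"
  shows "card T \<le> CARD('a) + 1"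
proof -
  have sM: "vec.subspace M" "vec.dim M = 5" using M by (simp_all add: psub_def)
  have pi: "vec.subspace (pi_of L P)" "vec.dim (pi_of L P) = 3"
    using pi_of_plane_pencil(1)[OF P] by (simp_all add: psub_def)
  define solid where "solid X = vec.span (pi_of L P \<union> pi_of L X)" for X
  define G where "G = {C. vec.subspace C \<and> pi_of L P \<subseteq> C \<and> C \<subseteq> M
    \<and> vec.dim C = vec.dim (pi_of L P) + 1}"
  have solid_G: "solid ` T \<subseteq> G"
  proof
    fix C assume "C \<in> solid ` T"
    then obtain X where X: "X \<in> T" and C: "C = solid X" by blast
    have "C \<subseteq> M" using piM T(4)[OF X] sM(1) by (simp add: C solid_def vec.span_minimal)
    moreover have "pi_of L P \<subseteq> C"
      unfolding C solid_def by (meson Un_upper1 vec.span_superset subset_trans)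
    moreover have "psub 3 C" unfolding C solid_def by (rule psub_span_pi_of[OF P T(1-3)[OF X]])
    ultimately show "C \<in> G" using pi by (simp add: G_def psub_def)
  qed
  have inj: "inj_on solid T"
  proof (rule inj_onI, rule ccontr)
    fix X Y assume "X \<in> T" "Y \<in> T" "solid X = solid Y" "X \<noteq> Y"
    then show False
      using span_pi_of_neq[OF P T(1-3)[OF \<open>X \<in> T\<close>] T(1-3)[OF \<open>Y \<in> T\<close>]] by (simp add: solid_def)
  qed
  have "card T \<le> card G" by (rule card_inj_on_le[OF inj solid_G]) simp
  also have "card G \<le> CARD('a) + 1" unfolding G_def
    by (rule card_intermediate_subspaces_le[OF pi(1) sM(1) piM]) (simp add: pi sM)
  finally show ?thesis .
qed

end

theorem lemma8:
  fixes L :: "('a::{field,finite} ^ 'm) set set"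
    and M P :: "('a ^ 'm) set"
  defines "q \<equiv> CARD('a)"
  assumes lines: "\<forall>l\<in>L. psub 1 l"
    and nonempty: "L \<noteq> {}"
    and Pt: "pt_cond q L"
    and Pl: "pl_cond q L"
    and Sd: "sd_cond q L"
    and To: "to_cond q L"
    and M: "psub 4 M"
    and P: "qM_point q L M P"
  shows "card {X. qM_point q L M X \<and> X \<subseteq> pi_of L P} \<le> q + 2"
proof -
  interpret line_set L using lines Pt Pl Sd by unfold_locales (simp_all add: q_def)
  have sM: "vec.subspace M" using M by (simp add: psub_def)
  have cP: "covered P" and piM: "pi_of L P \<subseteq> M"
    using qM_point_covered[OF P[unfolded q_def] sM] by simp_all
  define T where "T = {X. qM_point q L M X \<and> X \<subseteq> pi_of L P} - {P}"
  have T: "covered X" "X \<subseteq> pi_of L P" "X \<noteq> P" "pi_of L X \<subseteq> M" if "X \<in> T" for X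
  proof -
    have "qM_point CARD('a) L M X" "X \<subseteq> pi_of L P" "X \<noteq> P"
      using that by (simp_all add: T_def q_def)
    then show "covered X" "X \<subseteq> pi_of L P" "X \<noteq> P" "pi_of L X \<subseteq> M"
      using qM_point_covered[OF _ sM] by blast+
  qed
  have "{X. qM_point q L M X \<and> X \<subseteq> pi_of L P} \<subseteq> insert P T" by (auto simp: T_def)
  then have "card {X. qM_point q L M X \<and> X \<subseteq> pi_of L P} \<le> card (insert P T)"
    by (rule card_mono[rotated]) simp
  also have "\<dots> \<le> card T + 1" by (simp add: card_insert_if)
  also have "\<dots> \<le> q + 2"
    using card_points_of_pi_of_le[OF cP M piM T] by (simp add: q_def)
  finally show ?thesis .
qed

end
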